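(* Consider the $N$-layer cascade of the context and let $2\le n\le N$. Let $U$ be an intermediate species and $\mathcal{M}$ a monomial in non-intermediate variables such that $u\mathcal{M}$ appears in $s_{n-1,L_{n-1}}^{(\ell_0)}$ for some $\ell_0\ge1$ and in no derivative $s_{n-1,L_{n-1}}^{(\ell)}$ with $1\le\ell<\ell_0$. Assume every variable of $\mathcal{M}$ corresponds to a species in $\mathscr{S}^{(k)}$ for some $1\le k\le n-1$ or in $\mathscr{S}^{(2N+1)}$, that $\mathcal{M}$ does not involve two variables corresponding to species that react together, and that $s_{n-1,L_{n-1}}$ does not divide $\mathcal{M}$. Let $C_{\mathcal{M}}$ and $\widetilde C_{\mathcal{M}}$ be the coefficients (possibly zero for the latter) of $u\mathcal{M}$ in $s_{n-1,L_{n-1}}^{(\ell_0)}$ and $s_{n-1,L_{n-1}}^{(\ell_0+1)}$. Then $\widehat{\mathcal{M}}:=s_{n,L_n-1}u\mathcal{M}$ appears in $s_{n,L_n}^{(\ell_0+2)}$ and in no $s_{n,L_n}^{(\ell)}$ with $1\le\ell<\ell_0+2$; its coefficient in $s_{n,L_n}^{(\ell_0+2)}$ is $c_{n,L_n}a_{n,L_n}C_{\mathcal{M}}$, and its coefficient in $s_{n,L_n}^{(\ell_0+3)}$ is $c_{n,L_n}a_{n,L_n}(\widetilde C_{\mathcal{M}}-K_{n,L_n}C_{\mathcal{M}})$, where $K_{n,L_n}=b_{n,L_n}+c_{n,L_n}$.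
   Context: Species are capital letters, concentrations lower-case letters. Mass-action system: $\dot{\mathbf{x}}=\sum_{y\to y'}k_{yy'}\mathbf{x}^y(y'-y)$. Total derivative: $\dot\varphi=\sum_i\frac{\partial\varphi}{\partial x_i}\dot x_i$ with $\dot x_i$ replaced by the right-hand side; $\varphi^{(\ell)}$ the $\ell$-th iterate, a polynomial in concentrations with coefficients polynomial in the rate constants; a monomial appears if its coefficient is nonzero. A non-intermediate $X_1$ reacts with a non-intermediate $X_2$ if there is a reaction $X_1+X_2\to W$ with $W$ intermediate. Cascade: $N\ge1$, $L_1,\dots,L_N\ge1$. Non-intermediate species $E$, pairwise distinct $F_1,\dots,F_N$, and $S_{m,j}$ ($1\le m\le N$, $0\le j\le L_m$), all distinct; intermediates $U_{m,j},V_{m,j}$ ($1\le j\le L_m$), all distinct. $S_{0,L_0}:=E$. For each $m$, $1\le j\le L_m$: $S_{m-1,L_{m-1}}+S_{m,j-1}\to U_{m,j}$ (rate $a_{m,j}$), $U_{m,j}\to S_{m-1,L_{m-1}}+S_{m,j-1}$ ($b_{m,j}$), $U_{m,j}\to S_{m-1,L_{m-1}}+S_{m,j}$ ($c_{m,j}$), $F_m+S_{m,j}\to V_{m,j}$ ($\tilde a_{m,j}$), $V_{m,j}\to F_m+S_{m,j}$ ($\tilde b_{m,j}$), $V_{m,j}\to F_m+S_{m,j-1}$ ($\tilde c_{m,j}$). Partition of non-intermediates: $\mathscr{S}^{(m)}=\{S_{m,0},\dots,S_{m,L_m}\}$, $\mathscr{S}^{(N+m)}=\{F_m\}$ ($1\le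 m\le N$), $\mathscr{S}^{(2N+1)}=\{E\}$. *)

theory Defs
  imports "HOL-Library.Poly_Mapping"
begin

datatype species = E | F nat | S nat nat | U nat nat | V nat nat

text \<open>Rate constants: RA = a, RB = b, RC = c, RAt = a-tilde, RBt = b-tilde, RCt = c-tilde.\<close>
datatype rate = RA nat nat | RB nat nat | RC nat nat | RAt nat nat | RBt nat nat | RCt nat nat

text \<open>Coefficients: polynomials with integer coefficients in the rate constants.\<close>
type_synonym coef = "(rate \<Rightarrow>\<^sub>0 nat) \<Rightarrow>\<^sub>0 int"
text \<open>Polynomials in the concentrations with coefficients polynomial in the rate constants.\<close>
type_synonym cpoly = "(species \<Rightarrow>\<^sub>0 nat) \<Rightarrow>\<^sub>0 coef"
text \<open>Complexes / monomials in the species.\<close>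
type_synonym cplx = "species \<Rightarrow>\<^sub>0 nat"

definition sg :: "species \<Rightarrow> cplx" where
  "sg X = Poly_Mapping.single X 1"

definition rc :: "rate \<Rightarrow> coef" where
  "rc k = Poly_Mapping.single (Poly_Mapping.single k 1) 1"

definition Var :: "species \<Rightarrow> cpoly" where
  "Var X = Poly_Mapping.single (sg X) 1"

definition cconst :: "coef \<Rightarrow> cpoly" where
  "cconst c = Poly_Mapping.single 0 c"

definition mon :: "cplx \<Rightarrow> cpoly" where
  "mon y = Poly_Mapping.single y 1"

text \<open>S_{m,L_m}, with the convention S_{0,L_0} := E.\<close>
definition lastS :: "(nat \<Rightarrow> nat) \<Rightarrow> nat \<Rightarrow> species" where
  "lastS L m = (if m = 0 then E else S m (L m))"

definition intermediates :: "nat \<Rightarrow> (nat \<Rightarrow> nat) \<Rightarrow> species set" where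
  "intermediates N L =
     {U m j | m j. 1 \<le> m \<and> m \<le> N \<and> 1 \<le> j \<and> j \<le> L m}
   \<union> {V m j | m j. 1 \<le> m \<and> m \<le> N \<and> 1 \<le> j \<and> j \<le> L m}"

definition non_intermediates :: "nat \<Rightarrow> (nat \<Rightarrow> nat) \<Rightarrow> species set" where
  "non_intermediates N L =
     {E} \<union> {F m | m. 1 \<le> m \<and> m \<le> N}
   \<union> {S m j | m j. 1 \<le> m \<and> m \<le> N \<and> j \<le> L m}"

definition species_set :: "nat \<Rightarrow> (nat \<Rightarrow> nat) \<Rightarrow> species set" where
  "species_set N L = non_intermediates N L \<union> intermediates N L"

definition reactions :: "nat \<Rightarrow> (nat \<Rightarrow> nat) \<Rightarrow> (cplx \<times> cplx \<times> rate) set" where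
  "reactions N L = (\<Union>m\<in>{1..N}. \<Union>j\<in>{1..L m}.
     { (sg (lastS L (m - 1)) + sg (S m (j - 1)), sg (U m j), RA m j),
       (sg (U m j), sg (lastS L (m - 1)) + sg (S m (j - 1)), RB m j),
       (sg (U m j), sg (lastS L (m - 1)) + sg (S m j), RC m j),
       (sg (F m) + sg (S m j), sg (V m j), RAt m j),
       (sg (V m j), sg (F m) + sg (S m j), RBt m j),
       (sg (V m j), sg (F m) + sg (S m (j - 1)), RCt m j) })"

definition rhs :: "nat \<Rightarrow> (nat \<Rightarrow> nat) \<Rightarrow> species \<Rightarrow> cpoly" where
  "rhs N L X = (\<Sum>(y, y', k)\<in>reactions N L.
      cconst (rc k) * mon y * of_int (int (Poly_Mapping.lookup y' X) - int (Poly_Mapping.lookup y X)))"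

definition pd :: "species \<Rightarrow> cpoly \<Rightarrow> cpoly" where
  "pd X p = (\<Sum>m\<in>Poly_Mapping.keys p. Poly_Mapping.single (m - sg X) (of_nat (Poly_Mapping.lookup m X) * Poly_Mapping.lookup p m))"

definition Dt :: "nat \<Rightarrow> (nat \<Rightarrow> nat) \<Rightarrow> cpoly \<Rightarrow> cpoly" where
  "Dt N L p = (\<Sum>X\<in>species_set N L. pd X p * rhs N L X)"

definition deriv_iter :: "nat \<Rightarrow> (nat \<Rightarrow> nat) \<Rightarrow> nat \<Rightarrow> cpoly \<Rightarrow> cpoly" where
  "deriv_iter N L l p = (Dt N L ^^ l) p"

text \<open>Coefficient of a monomial in a polynomial; it appears iff the coefficient is nonzero.\<close>
definition coeff_of :: "cpoly \<Rightarrow> cplx \<Rightarrow> coef" where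
  "coeff_of p m = Poly_Mapping.lookup p m"

definition reacts :: "nat \<Rightarrow> (nat \<Rightarrow> nat) \<Rightarrow> species \<Rightarrow> species \<Rightarrow> bool" where
  "reacts N L X1 X2 \<longleftrightarrow> X1 \<in> non_intermediates N L \<and> X2 \<in> non_intermediates N L \<and>
     (\<exists>W\<in>intermediates N L. \<exists>k. (sg X1 + sg X2, sg W, k) \<in> reactions N L)"

definition block :: "nat \<Rightarrow> (nat \<Rightarrow> nat) \<Rightarrow> nat \<Rightarrow> species set" where
  "block N L k =
     (if 1 \<le> k \<and> k \<le> N then {S k j | j. j \<le> L k}
      else if N + 1 \<le> k \<and> k \<le> 2 * N then {F (k - N)}
      else if k = 2 * N + 1 then {E} else {})"

end

theory Submission
  imports Defs
begin

text \<open>Write \<open>s = S n (L n)\<close>, \<open>u = U n (L n)\<close>, \<open>q = S n (L n - 1)\<close>,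
  \<open>p = S (n - 1) (L (n - 1))\<close> and \<open>T = q W M\<close>. The mass-action equations give
  \<open>D s = c u + R\<close> and \<open>D u = a q p - K u\<close>, and no iterated derivative of \<open>R\<close> contains
  the monomial \<open>T\<close>. As \<open>D\<close> is a derivation, \<open>D^k (q p) = q D^k p + R_k\<close>, where every
  monomial of \<open>R_k\<close> contains two disjoint markers (reactant complexes or species absent
  from \<open>T\<close>); this property survives differentiation, and \<open>T\<close> lacks it because its only
  reactant complex is \<open>W\<close>, occurring once. Hence the coefficients \<open>\<sigma> k\<close>, \<open>\<delta> k\<close> of
  \<open>T\<close> in \<open>D^k s\<close>, \<open>D^k u\<close> and \<open>\<gamma> k\<close> of \<open>W M\<close> in \<open>D^k p\<close> satisfy
  \<open>\<sigma> (k + 1) = c \<delta> k\<close> and \<open>\<delta> (k + 1) = a \<gamma> k - K \<delta> k\<close> with \<open>\<delta> 0 = 0\<close>, and unrolling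
  these recurrences gives the claim.\<close>

section \<open>Formal derivatives\<close>

lemma lookup_single_mult_add:
  fixes P :: "'k::cancel_comm_monoid_add \<Rightarrow>\<^sub>0 'b::semiring_0"
  shows "Poly_Mapping.lookup (Poly_Mapping.single m c * P) (m + t) = c * Poly_Mapping.lookup P t"
proof -
  have "Poly_Mapping.lookup (Poly_Mapping.single m c * P) (m + t)
      = (\<Sum>l. Poly_Mapping.lookup (Poly_Mapping.single m c) l
               * (\<Sum>q. Poly_Mapping.lookup P q when m + t = l + q))"
    by (rule lookup_mult)
  also have "\<dots> = (\<Sum>l. (c * (\<Sum>q. Poly_Mapping.lookup P q when m + t = m + q)) when l = m)"
    by (rule Sum_any.cong) (simp add: lookup_single when_def)
  also have "(\<Sum>q. Poly_Mapping.lookup P q when m + t = m + q) = (\<Sum>q. Poly_Mapping.lookup P q when q = t)"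
    by (rule Sum_any.cong) (auto simp: when_def)
  finally show ?thesis by simp
qed

lemma lookup_cconst_mult: "Poly_Mapping.lookup (cconst c * P) Z = c * Poly_Mapping.lookup P Z"
  using lookup_single_mult_add[of 0 c P Z] by (simp add: cconst_def)

lemma single_sg_eq_cconst_mult_Var: "Poly_Mapping.single (sg X) c = cconst c * Var X"
  by (simp add: cconst_def Var_def mult_single)

lemma single_sg_add_sg_eq_cconst_mult_Var: "Poly_Mapping.single (sg A + sg B) c = cconst c * (Var B * Var A)"
  by (simp add: cconst_def Var_def mult_single add.commute)

lemma lookup_sg: "Poly_Mapping.lookup (sg X) Y = (if X = Y then 1 else 0)"
  by (simp add: sg_def lookup_single when_def)

lemma sg_eq_add_sg_iff: "sg Y = Z + sg X \<longleftrightarrow> X = Y \<and> Z = 0"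
proof
  assume eq: "sg Y = Z + sg X"
  then have "Poly_Mapping.lookup (sg Y) X = Poly_Mapping.lookup Z X + 1"
    by (simp add: lookup_add lookup_sg)
  then have "X = Y" by (auto simp: lookup_sg split: if_splits)
  with eq show "X = Y \<and> Z = 0"
    by (auto simp: poly_mapping_eq_iff fun_eq_iff lookup_add lookup_sg)
qed auto

lemma lookup_Var_mult:
  "Poly_Mapping.lookup (Var X * P) Z
     = (if 0 < Poly_Mapping.lookup Z X then Poly_Mapping.lookup P (Z - sg X) else 0)"
proof (cases "0 < Poly_Mapping.lookup Z X")
  case True
  then have "sg X + (Z - sg X) = Z"
    by (auto simp: poly_mapping_eq_iff fun_eq_iff lookup_add lookup_minus lookup_sg)
  moreover have "Poly_Mapping.lookup (Var X * P) (sg X + (Z - sg X)) = Poly_Mapping.lookup P (Z - sg X)"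
    unfolding Var_def by (simp add: lookup_single_mult_add)
  ultimately show ?thesis using True by simp
next
  case False
  then have "Z \<notin> Poly_Mapping.keys (Var X * P)"
    using keys_mult[of "Var X" P] by (auto simp: Var_def lookup_add lookup_sg)
  with False show ?thesis by (simp add: in_keys_iff)
qed

lemma lookup_pd:
  "Poly_Mapping.lookup (pd X P) Z = of_nat (Poly_Mapping.lookup Z X + 1) * Poly_Mapping.lookup P (Z + sg X)"
proof -
  define c where "c m = (of_nat (Poly_Mapping.lookup m X) * Poly_Mapping.lookup P m :: coef)" for m
  have "Poly_Mapping.lookup (pd X P) Z = (\<Sum>m\<in>Poly_Mapping.keys P. (c m when m - sg X = Z))"
    by (simp add: pd_def lookup_sum lookup_single c_def)
  also have "\<dots> = (\<Sum>m\<in>Poly_Mapping.keys P. (if m = Z + sg X then c m else 0))"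
  proof (rule sum.cong)
    fix m
    show "(c m when m - sg X = Z) = (if m = Z + sg X then c m else 0)"
    proof (cases "Poly_Mapping.lookup m X = 0")
      case False
      then have "m - sg X = Z \<longleftrightarrow> m = Z + sg X"
        by (auto simp: poly_mapping_eq_iff fun_eq_iff lookup_minus lookup_add lookup_sg)
      then show ?thesis by (simp add: when_def)
    qed (auto simp: c_def)
  qed simp
  also have "\<dots> = c (Z + sg X)"
    by (simp add: c_def in_keys_iff)
  finally show ?thesis by (simp add: c_def lookup_add lookup_sg)
qed

lemma pd_add: "pd X (P + Q) = pd X P + pd X Q"
  by (rule poly_mapping_eqI) (simp add: lookup_pd lookup_add distrib_left)

lemma pd_diff: "pd X (P - Q) = pd X P - pd X Q"
  by (rule poly_mapping_eqI) (simp add: lookup_pd lookup_minus right_diff_distrib)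

lemma pd_cconst_mult: "pd X (cconst c * P) = cconst c * pd X P"
  by (rule poly_mapping_eqI) (simp add: lookup_pd lookup_cconst_mult mult.left_commute)

lemma pd_Var: "pd X (Var Y) = (if X = Y then 1 else 0)"
  by (rule poly_mapping_eqI)
    (auto simp: lookup_pd Var_def lookup_single when_def sg_eq_add_sg_iff lookup_one)

lemma pd_Var_mult: "pd X (Var Y * P) = pd X (Var Y) * P + Var Y * pd X P"
proof (rule poly_mapping_eqI)
  fix Z
  have [simp]: "Z + sg X - sg X = Z" by simp
  show "Poly_Mapping.lookup (pd X (Var Y * P)) Z = Poly_Mapping.lookup (pd X (Var Y) * P + Var Y * pd X P) Z"
  proof (cases "X = Y")
    case True
    show ?thesis
    proof (cases "0 < Poly_Mapping.lookup Z X")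
      case pos: True
      have "Z - sg X + sg X = Z"
        using pos by (auto simp: poly_mapping_eq_iff fun_eq_iff lookup_add lookup_minus lookup_sg)
      moreover have "(of_nat (Poly_Mapping.lookup Z X) :: coef) = 1 + of_nat (Poly_Mapping.lookup (Z - sg X) X)"
        using pos by (simp add: lookup_minus lookup_sg)
      ultimately show ?thesis using True pos
        by (simp add: lookup_pd lookup_add lookup_Var_mult lookup_sg pd_Var distrib_right)
    qed (use True in \<open>simp add: lookup_pd lookup_add lookup_Var_mult lookup_sg pd_Var\<close>)
  next
    case False
    then have "0 < Poly_Mapping.lookup Z Y \<Longrightarrow> Z + sg X - sg Y = Z - sg Y + sg X"
      by (auto simp: poly_mapping_eq_iff fun_eq_iff lookup_add lookup_minus lookup_sg)
    with False show ?thesis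
      by (simp add: lookup_pd lookup_add lookup_Var_mult lookup_sg pd_Var lookup_minus)
  qed
qed

lemma finite_species_set: "finite (species_set N L)"
proof -
  have "species_set N L \<subseteq> {E} \<union> F ` {1..N} \<union> (\<lambda>(m, j). S m j) ` (SIGMA m:{1..N}. {0..L m})
      \<union> (\<lambda>(m, j). U m j) ` (SIGMA m:{1..N}. {1..L m}) \<union> (\<lambda>(m, j). V m j) ` (SIGMA m:{1..N}. {1..L m})"
    by (auto simp: species_set_def non_intermediates_def intermediates_def)
  then show ?thesis by (rule finite_subset) auto
qed

lemma finite_reactions: "finite (reactions N L)"
  unfolding reactions_def by auto

lemma Dt_add: "Dt N L (P + Q) = Dt N L P + Dt N L Q"
  by (simp add: Dt_def pd_add distrib_right sum.distrib)

lemma Dt_diff: "Dt N L (P - Q) = Dt N L P - Dt N L Q"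
  by (simp add: Dt_def pd_diff left_diff_distrib sum_subtractf)

lemma Dt_cconst_mult: "Dt N L (cconst c * P) = cconst c * Dt N L P"
  by (simp add: Dt_def pd_cconst_mult sum_distrib_left mult.assoc)

lemma Dt_Var:
  assumes "X \<in> species_set N L"
  shows "Dt N L (Var X) = rhs N L X"
proof -
  have "Dt N L (Var X) = (\<Sum>Y\<in>species_set N L. if Y = X then rhs N L Y else 0)"
    unfolding Dt_def by (rule sum.cong) (auto simp: pd_Var)
  with assms show ?thesis by (simp add: finite_species_set)
qed

lemma Dt_Var_mult:
  assumes "X \<in> species_set N L"
  shows "Dt N L (Var X * P) = Var X * Dt N L P + P * rhs N L X"
proof -
  have "(\<Sum>Y\<in>species_set N L. pd Y (Var X) * P * rhs N L Y)
      = (\<Sum>Y\<in>species_set N L. if Y = X then P * rhs N L Y else 0)"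
    by (rule sum.cong) (auto simp: pd_Var)
  also have "\<dots> = P * rhs N L X"
    using assms by (simp add: finite_species_set)
  finally have "(\<Sum>Y\<in>species_set N L. pd Y (Var X) * P * rhs N L Y) = P * rhs N L X" .
  then show ?thesis
    by (simp add: Dt_def pd_Var_mult distrib_right sum.distrib sum_distrib_left mult.assoc add.commute)
qed

lemma funpow_Dt_add: "(Dt N L ^^ k) (P + Q) = (Dt N L ^^ k) P + (Dt N L ^^ k) Q"
  by (induction k) (simp_all add: Dt_add)

lemma funpow_Dt_diff: "(Dt N L ^^ k) (P - Q) = (Dt N L ^^ k) P - (Dt N L ^^ k) Q"
  by (induction k) (simp_all add: Dt_diff)

lemma funpow_Dt_cconst_mult: "(Dt N L ^^ k) (cconst c * P) = cconst c * (Dt N L ^^ k) P"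
  by (induction k) (simp_all add: Dt_cconst_mult)

section \<open>Monomials of iterated derivatives\<close>

definition reaction_term :: "species \<Rightarrow> cplx \<times> cplx \<times> rate \<Rightarrow> cpoly" where
  "reaction_term X = (\<lambda>(y, y', k). Poly_Mapping.single y
      (rc k * of_int (int (Poly_Mapping.lookup y' X) - int (Poly_Mapping.lookup y X))))"

lemma rhs_eq_sum_reaction_term: "rhs N L X = sum (reaction_term X) (reactions N L)"
proof -
  have term_eq: "cconst c * mon y * of_int d = Poly_Mapping.single y (c * of_int d)" for c y d
  proof -
    have "(of_int d :: cpoly) = Poly_Mapping.single 0 (of_int d)" by simp
    then have "cconst c * mon y * of_int d
        = Poly_Mapping.single 0 c * Poly_Mapping.single y 1 * Poly_Mapping.single 0 (of_int d)"
      by (simp only: cconst_def mon_def)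
    also have "\<dots> = Poly_Mapping.single (0 + y + 0) (c * 1 * of_int d)" by (simp only: mult_single)
    finally show ?thesis by simp
  qed
  show ?thesis unfolding rhs_def reaction_term_def by (simp only: term_eq)
qed

lemma reaction_term_eq_0:
  "Poly_Mapping.lookup y' X = Poly_Mapping.lookup y X \<Longrightarrow> reaction_term X (y, y', k) = 0"
  by (simp add: reaction_term_def)

lemma keys_reaction_term:
  "Z \<in> Poly_Mapping.keys (reaction_term X (y, y', k))
     \<Longrightarrow> Z = y \<and> Poly_Mapping.lookup y' X \<noteq> Poly_Mapping.lookup y X"
  by (auto simp: reaction_term_def split: if_splits)

lemma keys_sum_reaction_term:
  assumes "Z \<in> Poly_Mapping.keys (sum (reaction_term X) A)"
  shows "\<exists>y' k. (Z, y', k) \<in> A \<and> Poly_Mapping.lookup y' X \<noteq> Poly_Mapping.lookup Z X"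
proof -
  from assms obtain r where "r \<in> A" "Z \<in> Poly_Mapping.keys (reaction_term X r)"
    using keys_sum[of "reaction_term X" A] by blast
  then show ?thesis using keys_reaction_term by (cases r) blast
qed

lemma keys_rhs:
  "Z \<in> Poly_Mapping.keys (rhs N L X)
     \<Longrightarrow> \<exists>y' k. (Z, y', k) \<in> reactions N L \<and> Poly_Mapping.lookup y' X \<noteq> Poly_Mapping.lookup Z X"
  unfolding rhs_eq_sum_reaction_term by (rule keys_sum_reaction_term)

definition reactant :: "nat \<Rightarrow> (nat \<Rightarrow> nat) \<Rightarrow> cplx \<Rightarrow> bool" where
  "reactant N L y \<longleftrightarrow> (\<exists>y' k. (y, y', k) \<in> reactions N L)"

definition submonomial :: "cplx \<Rightarrow> cplx \<Rightarrow> bool" where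
  "submonomial y Z \<longleftrightarrow> (\<forall>X. Poly_Mapping.lookup y X \<le> Poly_Mapping.lookup Z X)"

lemma submonomial_sg_add_sgD:
  "submonomial (sg A + sg B) Z \<Longrightarrow> 0 < Poly_Mapping.lookup Z A \<and> 0 < Poly_Mapping.lookup Z B"
  unfolding submonomial_def by (metis add_is_0 gr0I le_zero_eq lookup_add lookup_sg zero_neq_one)

lemma submonomial_sgD: "submonomial (sg A) Z \<Longrightarrow> 0 < Poly_Mapping.lookup Z A"
  unfolding submonomial_def by (metis gr0I le_zero_eq lookup_sg zero_neq_one)

definition reaction_step :: "nat \<Rightarrow> (nat \<Rightarrow> nat) \<Rightarrow> cplx \<Rightarrow> cplx \<Rightarrow> bool" where
  "reaction_step N L Z Z' \<longleftrightarrow> (\<exists>X y y' k. (y, y', k) \<in> reactions N L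
      \<and> Poly_Mapping.lookup y' X \<noteq> Poly_Mapping.lookup y X
      \<and> 0 < Poly_Mapping.lookup Z X \<and> Z' = Z - sg X + y)"

lemma keys_Dt:
  assumes "Z' \<in> Poly_Mapping.keys (Dt N L P)"
  shows "\<exists>Z\<in>Poly_Mapping.keys P. reaction_step N L Z Z'"
proof -
  obtain X where "Z' \<in> Poly_Mapping.keys (pd X P * rhs N L X)"
    using assms keys_sum[of "\<lambda>X. pd X P * rhs N L X" "species_set N L"] unfolding Dt_def by blast
  then obtain a b where ab: "Z' = a + b" "a \<in> Poly_Mapping.keys (pd X P)" "b \<in> Poly_Mapping.keys (rhs N L X)"
    using keys_mult[of "pd X P" "rhs N L X"] by blast
  from ab(3) obtain y' k where "(b, y', k) \<in> reactions N L" "Poly_Mapping.lookup y' X \<noteq> Poly_Mapping.lookup b X"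
    using keys_rhs by blast
  then have "reaction_step N L (a + sg X) Z'"
    unfolding reaction_step_def using ab(1) by (auto simp: lookup_add lookup_sg)
  moreover from ab(2) have "a + sg X \<in> Poly_Mapping.keys P"
    by (auto simp: in_keys_iff lookup_pd)
  ultimately show ?thesis by blast
qed

lemma keys_funpow_Dt_subset:
  assumes closed: "\<And>Z Z'. Z \<in> A \<Longrightarrow> reaction_step N L Z Z' \<Longrightarrow> Z' \<in> A"
    and "Poly_Mapping.keys P \<subseteq> A"
  shows "Poly_Mapping.keys ((Dt N L ^^ k) P) \<subseteq> A"
proof (induction k)
  case (Suc k)
  then show ?case using keys_Dt closed by fastforce
qed (use assms(2) in simp)

lemma lookup_funpow_Dt_eq_0:
  assumes "\<And>Z Z'. Z \<in> A \<Longrightarrow> reaction_step N L Z Z' \<Longrightarrow> Z' \<in> A"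
    and "Poly_Mapping.keys P \<subseteq> A" and "T \<notin> A"
  shows "Poly_Mapping.lookup ((Dt N L ^^ k) P) T = 0"
proof -
  have "Poly_Mapping.keys ((Dt N L ^^ k) P) \<subseteq> A"
    by (rule keys_funpow_Dt_subset) (use assms(1,2) in auto)
  with assms(3) show ?thesis by (auto simp: in_keys_iff)
qed

lemma keys_funpow_Dt_Suc:
  assumes "Z \<in> Poly_Mapping.keys ((Dt N L ^^ Suc k) P)"
  shows "\<exists>y. reactant N L y \<and> submonomial y Z"
proof -
  from assms obtain Z0 X y y' r where "(y, y', r) \<in> reactions N L" "Z = Z0 - sg X + y"
    using keys_Dt unfolding reaction_step_def by fastforce
  then show ?thesis
    by (intro exI[of _ y]) (auto simp: reactant_def submonomial_def lookup_add)
qed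

text \<open>Replacing one species of a monomial by a reactant complex cannot destroy two disjoint
  markers, so being doubly marked is inherited along reaction steps.\<close>

definition marker :: "nat \<Rightarrow> (nat \<Rightarrow> nat) \<Rightarrow> cplx \<Rightarrow> cplx \<Rightarrow> bool" where
  "marker N L T y \<longleftrightarrow> reactant N L y \<or> (\<exists>X. y = sg X \<and> Poly_Mapping.lookup T X = 0)"

definition doubly_marked :: "nat \<Rightarrow> (nat \<Rightarrow> nat) \<Rightarrow> cplx \<Rightarrow> cplx \<Rightarrow> bool" where
  "doubly_marked N L T Z \<longleftrightarrow>
     (\<exists>y1 y2. marker N L T y1 \<and> marker N L T y2 \<and> submonomial (y1 + y2) Z)"

lemma doubly_marked_reaction_step:
  assumes "doubly_marked N L T Z" and "reaction_step N L Z Z'"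
  shows "doubly_marked N L T Z'"
proof -
  from assms(2) obtain X y0 y0' k where r: "(y0, y0', k) \<in> reactions N L"
    and pos: "0 < Poly_Mapping.lookup Z X" and Z': "Z' = Z - sg X + y0"
    unfolding reaction_step_def by blast
  from assms(1) obtain y1 y2 where markers: "marker N L T y1" "marker N L T y2"
    and le: "\<And>Y. Poly_Mapping.lookup y1 Y + Poly_Mapping.lookup y2 Y \<le> Poly_Mapping.lookup Z Y"
    unfolding doubly_marked_def submonomial_def by (auto simp: lookup_add)
  have "marker N L T y0" using r unfolding marker_def reactant_def by blast
  have lookup_Z': "Poly_Mapping.lookup Z' Y
      = Poly_Mapping.lookup Z Y - (if X = Y then 1 else 0) + Poly_Mapping.lookup y0 Y" for Y
    by (simp add: Z' lookup_add lookup_minus lookup_sg)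
  have sub: "submonomial (a + b) Z'"
    if "\<And>Y. Poly_Mapping.lookup a Y + Poly_Mapping.lookup b Y \<le> Poly_Mapping.lookup Z' Y" for a b
    using that by (simp add: submonomial_def lookup_add)
  consider "Poly_Mapping.lookup y1 X + Poly_Mapping.lookup y2 X < Poly_Mapping.lookup Z X"
    | "0 < Poly_Mapping.lookup y1 X" | "0 < Poly_Mapping.lookup y2 X"
    using pos by linarith
  then show ?thesis
  proof cases
    case 1
    have "submonomial (y1 + y2) Z'"
    proof (rule sub)
      show "Poly_Mapping.lookup y1 Y + Poly_Mapping.lookup y2 Y \<le> Poly_Mapping.lookup Z' Y" for Y
        using le[of Y] 1 by (auto simp: lookup_Z')
    qed
    with markers show ?thesis unfolding doubly_marked_def by blast
  next
    case 2
    have "submonomial (y0 + y2) Z'"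
    proof (rule sub)
      show "Poly_Mapping.lookup y0 Y + Poly_Mapping.lookup y2 Y \<le> Poly_Mapping.lookup Z' Y" for Y
        using le[of Y] 2 by (auto simp: lookup_Z')
    qed
    with markers \<open>marker N L T y0\<close> show ?thesis unfolding doubly_marked_def by blast
  next
    case 3
    have "submonomial (y1 + y0) Z'"
    proof (rule sub)
      show "Poly_Mapping.lookup y1 Y + Poly_Mapping.lookup y0 Y \<le> Poly_Mapping.lookup Z' Y" for Y
        using le[of Y] 3 by (auto simp: lookup_Z')
    qed
    with markers \<open>marker N L T y0\<close> show ?thesis unfolding doubly_marked_def by blast
  qed
qed

lemma doubly_marked_sg_add_sg:
  "Poly_Mapping.lookup T A = 0 \<Longrightarrow> Poly_Mapping.lookup T B = 0 \<Longrightarrow> doubly_marked N L T (sg A + sg B)"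
  unfolding doubly_marked_def marker_def submonomial_def by (intro exI[of _ "sg A"] exI[of _ "sg B"]) auto

lemma doubly_marked_keys_mult_rhs:
  assumes "Poly_Mapping.lookup T p = 0"
    and "Z \<in> Poly_Mapping.keys ((Dt N L ^^ k) (Var p) * rhs N L q)"
  shows "doubly_marked N L T Z"
proof -
  obtain a b where Z: "Z = a + b" and a: "a \<in> Poly_Mapping.keys ((Dt N L ^^ k) (Var p))"
    and b: "b \<in> Poly_Mapping.keys (rhs N L q)"
    using assms(2) keys_mult[of "(Dt N L ^^ k) (Var p)" "rhs N L q"] by blast
  have "marker N L T b" using keys_rhs[OF b] unfolding marker_def reactant_def by blast
  moreover have "\<exists>y. marker N L T y \<and> submonomial y a"
  proof (cases k)
    case 0
    with a have "a = sg p" by (simp add: Var_def sg_def)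
    with assms(1) show ?thesis
      unfolding marker_def submonomial_def by (intro exI[of _ "sg p"]) auto
  next
    case (Suc k')
    with a obtain y where "reactant N L y" "submonomial y a" using keys_funpow_Dt_Suc by blast
    then show ?thesis unfolding marker_def by blast
  qed
  then obtain y where "marker N L T y" "submonomial (y + b) Z"
    using Z by (auto simp: submonomial_def lookup_add)
  ultimately show ?thesis unfolding doubly_marked_def by blast
qed

text \<open>The remainder of the Leibniz expansion of \<open>Dt^k (q * p)\<close> is doubly marked, so it
  contributes nothing to a monomial that is not.\<close>

lemma keys_funpow_Dt_Var_mult_remainder:
  assumes q: "q \<in> species_set N L" and "Poly_Mapping.lookup T p = 0"
  shows "Poly_Mapping.keys ((Dt N L ^^ k) (Var q * Var p) - Var q * (Dt N L ^^ k) (Var p))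
           \<subseteq> {Z. doubly_marked N L T Z}"
proof (induction k)
  case (Suc k)
  let ?P = "(Dt N L ^^ k) (Var p)"
  let ?R = "(Dt N L ^^ k) (Var q * Var p) - Var q * ?P"
  have "(Dt N L ^^ Suc k) (Var q * Var p) - Var q * (Dt N L ^^ Suc k) (Var p)
      = Dt N L ?R + ?P * rhs N L q"
    by (simp add: Dt_diff Dt_Var_mult[OF q])
  moreover have "Poly_Mapping.keys (Dt N L ?R) \<subseteq> {Z. doubly_marked N L T Z}"
    using Suc.IH keys_Dt doubly_marked_reaction_step by blast
  moreover have "Poly_Mapping.keys (?P * rhs N L q) \<subseteq> {Z. doubly_marked N L T Z}"
    using doubly_marked_keys_mult_rhs assms(2) by blast
  ultimately show ?case using keys_add[of "Dt N L ?R" "?P * rhs N L q"] by auto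
qed simp

lemma lookup_funpow_Dt_Var_mult:
  assumes "q \<in> species_set N L" "Poly_Mapping.lookup T p = 0" "0 < Poly_Mapping.lookup T q"
    and "\<not> doubly_marked N L T T"
  shows "Poly_Mapping.lookup ((Dt N L ^^ k) (Var q * Var p)) T
       = Poly_Mapping.lookup ((Dt N L ^^ k) (Var p)) (T - sg q)"
proof -
  let ?R = "(Dt N L ^^ k) (Var q * Var p) - Var q * (Dt N L ^^ k) (Var p)"
  have "T \<notin> Poly_Mapping.keys ?R"
    using keys_funpow_Dt_Var_mult_remainder[OF assms(1,2)] assms(4) by blast
  then have "Poly_Mapping.lookup ((Dt N L ^^ k) (Var q * Var p)) T
      = Poly_Mapping.lookup (Var q * (Dt N L ^^ k) (Var p)) T"
    by (simp add: in_keys_iff lookup_minus)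
  with assms(3) show ?thesis by (simp add: lookup_Var_mult)
qed

section \<open>Reactions of the cascade\<close>

lemma reactions_cases [consumes 1, case_names RA RB RC RAt RBt RCt]:
  assumes "r \<in> reactions N L"
  obtains (RA) m j where "1 \<le> m" "m \<le> N" "1 \<le> j" "j \<le> L m"
      "r = (sg (lastS L (m - 1)) + sg (S m (j - 1)), sg (U m j), RA m j)"
    | (RB) m j where "1 \<le> m" "m \<le> N" "1 \<le> j" "j \<le> L m"
      "r = (sg (U m j), sg (lastS L (m - 1)) + sg (S m (j - 1)), RB m j)"
    | (RC) m j where "1 \<le> m" "m \<le> N" "1 \<le> j" "j \<le> L m"
      "r = (sg (U m j), sg (lastS L (m - 1)) + sg (S m j), RC m j)"
    | (RAt) m j where "1 \<le> m" "m \<le> N" "1 \<le> j" "j \<le> L m"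
      "r = (sg (F m) + sg (S m j), sg (V m j), RAt m j)"
    | (RBt) m j where "1 \<le> m" "m \<le> N" "1 \<le> j" "j \<le> L m"
      "r = (sg (V m j), sg (F m) + sg (S m j), RBt m j)"
    | (RCt) m j where "1 \<le> m" "m \<le> N" "1 \<le> j" "j \<le> L m"
      "r = (sg (V m j), sg (F m) + sg (S m (j - 1)), RCt m j)"
  using assms unfolding reactions_def by auto

lemma reactions_memI:
  assumes "1 \<le> m" "m \<le> N" "1 \<le> j" "j \<le> L m"
  shows "(sg (lastS L (m - 1)) + sg (S m (j - 1)), sg (U m j), RA m j) \<in> reactions N L"
    "(sg (U m j), sg (lastS L (m - 1)) + sg (S m (j - 1)), RB m j) \<in> reactions N L"
    "(sg (U m j), sg (lastS L (m - 1)) + sg (S m j), RC m j) \<in> reactions N L"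
  unfolding reactions_def using assms by (intro UN_I[of m] UN_I[of j]; simp)+

lemma reactions_changing_U:
  assumes "(y, y', k) \<in> reactions N L"
    and "Poly_Mapping.lookup y' (U a b) \<noteq> Poly_Mapping.lookup y (U a b)"
  shows "(y, y', k) \<in> {(sg (lastS L (a - 1)) + sg (S a (b - 1)), sg (U a b), RA a b),
                        (sg (U a b), sg (lastS L (a - 1)) + sg (S a (b - 1)), RB a b),
                        (sg (U a b), sg (lastS L (a - 1)) + sg (S a b), RC a b)}"
  using assms by (cases rule: reactions_cases) (auto simp: lookup_add lookup_sg lastS_def split: if_splits)

lemma reactions_changing_V:
  assumes "(y, y', k) \<in> reactions N L"
    and "Poly_Mapping.lookup y' (V a b) \<noteq> Poly_Mapping.lookup y (V a b)"
  shows "y = sg (V a b) \<or> y = sg (F a) + sg (S a b)"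
  using assms by (cases rule: reactions_cases) (auto simp: lookup_add lookup_sg lastS_def split: if_splits)

lemma reactions_changing_S_last:
  assumes "(y, y', k) \<in> reactions N L"
    and "Poly_Mapping.lookup y' (S a (L a)) \<noteq> Poly_Mapping.lookup y (S a (L a))" and "1 \<le> a"
  shows "(y, y', k) = (sg (U a (L a)), sg (lastS L (a - 1)) + sg (S a (L a)), RC a (L a))
    \<or> (\<exists>j. y = sg (S a (L a)) + sg (S (Suc a) (j - 1)) \<or> y = sg (U (Suc a) j))
    \<or> y = sg (F a) + sg (S a (L a)) \<or> y = sg (V a (L a))"
  using assms(1)
proof (cases rule: reactions_cases)
  case (RA m j)
  with assms(2,3) show ?thesis by (cases "m = Suc a") (auto simp: lookup_add lookup_sg lastS_def split: if_splits)
next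
  case (RB m j)
  with assms(2,3) show ?thesis by (cases "m = Suc a") (auto simp: lookup_add lookup_sg lastS_def split: if_splits)
next
  case (RC m j)
  with assms(2,3) show ?thesis by (cases "m = Suc a") (auto simp: lookup_add lookup_sg lastS_def split: if_splits)
qed (use assms(2) in \<open>auto simp: lookup_add lookup_sg split: if_splits\<close>)

lemma reaction_step_sg:
  assumes "reaction_step N L (sg X) Z"
  shows "\<exists>y' k. (Z, y', k) \<in> reactions N L \<and> Poly_Mapping.lookup y' X \<noteq> Poly_Mapping.lookup Z X"
proof -
  from assms obtain Y y y' k where r: "(y, y', k) \<in> reactions N L"
    "Poly_Mapping.lookup y' Y \<noteq> Poly_Mapping.lookup y Y" "0 < Poly_Mapping.lookup (sg X) Y"
    and Z: "Z = sg X - sg Y + y"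
    unfolding reaction_step_def by blast
  then have "Y = X" by (auto simp: lookup_sg split: if_splits)
  with r Z show ?thesis by auto
qed

lemma rhs_U:
  assumes "1 \<le> m" "m \<le> N" "1 \<le> j" "j \<le> L m"
  shows "rhs N L (U m j)
    = Poly_Mapping.single (sg (lastS L (m - 1)) + sg (S m (j - 1))) (rc (RA m j))
      - Poly_Mapping.single (sg (U m j)) (rc (RB m j) + rc (RC m j))"
proof -
  define changing where "changing =
    {(sg (lastS L (m - 1)) + sg (S m (j - 1)), sg (U m j), RA m j),
     (sg (U m j), sg (lastS L (m - 1)) + sg (S m (j - 1)), RB m j),
     (sg (U m j), sg (lastS L (m - 1)) + sg (S m j), RC m j)}"
  have "changing \<subseteq> reactions N L"
    using reactions_memI[of m N j L] assms by (simp add: changing_def)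
  moreover have "\<forall>r\<in>reactions N L - changing. reaction_term (U m j) r = 0"
    using reactions_changing_U reaction_term_eq_0 unfolding changing_def by fastforce
  ultimately have "rhs N L (U m j) = sum (reaction_term (U m j)) changing"
    unfolding rhs_eq_sum_reaction_term by (rule sum.mono_neutral_right[OF finite_reactions])
  also have "\<dots> = Poly_Mapping.single (sg (lastS L (m - 1)) + sg (S m (j - 1))) (rc (RA m j))
      - Poly_Mapping.single (sg (U m j)) (rc (RB m j) + rc (RC m j))"
    by (simp add: changing_def reaction_term_def lookup_add lookup_sg lastS_def single_add
        single_uminus)
  finally show ?thesis .
qed

lemma rhs_S_last:
  assumes "1 \<le> m" "m \<le> N" "1 \<le> L m"
  obtains R where
    "rhs N L (S m (L m)) = Poly_Mapping.single (sg (U m (L m))) (rc (RC m (L m))) + R"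
    "\<And>Z. Z \<in> Poly_Mapping.keys R \<Longrightarrow>
       (\<exists>j. Z = sg (S m (L m)) + sg (S (Suc m) (j - 1)) \<or> Z = sg (U (Suc m) j))
       \<or> Z = sg (F m) + sg (S m (L m)) \<or> Z = sg (V m (L m))"
proof -
  define r where "r = (sg (U m (L m)), sg (lastS L (m - 1)) + sg (S m (L m)), RC m (L m))"
  have "r \<in> reactions N L" using reactions_memI(3)[of m N "L m" L] assms by (simp add: r_def)
  then have "rhs N L (S m (L m))
      = reaction_term (S m (L m)) r + sum (reaction_term (S m (L m))) (reactions N L - {r})"
    unfolding rhs_eq_sum_reaction_term by (rule sum.remove[OF finite_reactions])
  moreover have "reaction_term (S m (L m)) r = Poly_Mapping.single (sg (U m (L m))) (rc (RC m (L m)))"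
    using assms(1) by (auto simp: r_def reaction_term_def lookup_add lookup_sg lastS_def)
  moreover have "(\<exists>j. Z = sg (S m (L m)) + sg (S (Suc m) (j - 1)) \<or> Z = sg (U (Suc m) j))
       \<or> Z = sg (F m) + sg (S m (L m)) \<or> Z = sg (V m (L m))"
    if "Z \<in> Poly_Mapping.keys (sum (reaction_term (S m (L m))) (reactions N L - {r}))" for Z
  proof -
    from keys_sum_reaction_term[OF that] obtain y' k where "(Z, y', k) \<in> reactions N L - {r}"
      "Poly_Mapping.lookup y' (S m (L m)) \<noteq> Poly_Mapping.lookup Z (S m (L m))"
      by blast
    with reactions_changing_S_last[of Z y' k N L m] assms(1) show ?thesis
      by (auto simp: r_def)
  qed
  ultimately show ?thesis using that by auto
qed

lemma coupled_recurrence_initial_terms: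
  fixes \<sigma> \<delta> \<gamma> :: "nat \<Rightarrow> 'a::comm_ring"
  assumes \<sigma>: "\<And>k. \<sigma> (Suc k) = c * \<delta> k"
    and \<delta>: "\<And>k. \<delta> (Suc k) = a * \<gamma> k - K * \<delta> k"
    and \<delta>0: "\<delta> 0 = 0" and \<gamma>: "\<And>k. k < l0 \<Longrightarrow> \<gamma> k = 0"
  shows "\<forall>l. 1 \<le> l \<and> l < l0 + 2 \<longrightarrow> \<sigma> l = 0"
    and "\<sigma> (l0 + 2) = c * a * \<gamma> l0"
    and "\<sigma> (l0 + 3) = c * a * (\<gamma> (l0 + 1) - K * \<gamma> l0)"
proof -
  have \<delta>_early: "\<delta> k = 0" if "k \<le> l0" for k
    using that by (induction k) (simp_all add: \<delta>0 \<delta> \<gamma>)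
  have \<delta>_first: "\<delta> (l0 + 1) = a * \<gamma> l0"
    using \<delta>[of l0] \<delta>_early[of l0] by simp
  show "\<forall>l. 1 \<le> l \<and> l < l0 + 2 \<longrightarrow> \<sigma> l = 0"
  proof (intro allI impI)
    fix l assume "1 \<le> l \<and> l < l0 + 2"
    then obtain k where "l = Suc k" "k \<le> l0" by (cases l) auto
    then show "\<sigma> l = 0" using \<sigma> \<delta>_early by simp
  qed
  show "\<sigma> (l0 + 2) = c * a * \<gamma> l0"
    using \<sigma>[of "l0 + 1"] \<delta>_first by (simp add: mult.assoc)
  have "\<sigma> (l0 + 3) = c * \<delta> (l0 + 2)"
    using \<sigma>[of "l0 + 2"] by (simp add: numeral_3_eq_3)
  also have "\<dots> = c * (a * \<gamma> (l0 + 1) - K * (a * \<gamma> l0))"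
    using \<delta>[of "l0 + 1"] \<delta>_first by simp
  finally show "\<sigma> (l0 + 3) = c * a * (\<gamma> (l0 + 1) - K * \<gamma> l0)"
    by (simp add: algebra_simps)
qed

lemma rc_mult_rc_mult_nonzero:
  assumes "C \<noteq> 0"
  shows "rc a * rc b * C \<noteq> 0"
proof -
  obtain t where t: "Poly_Mapping.lookup C t \<noteq> 0"
    using assms by (metis poly_mapping_eqI lookup_zero)
  have "rc a * rc b = Poly_Mapping.single (Poly_Mapping.single a 1 + Poly_Mapping.single b 1) 1"
    by (simp add: rc_def mult_single)
  then have "Poly_Mapping.lookup (rc a * rc b * C) (Poly_Mapping.single a 1 + Poly_Mapping.single b 1 + t)
      = Poly_Mapping.lookup C t"
    by (simp add: lookup_single_mult_add)
  with t show ?thesis by auto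
qed

section \<open>Transfer from layer \<open>n - 1\<close> to layer \<open>n\<close>\<close>

locale cascade_layer_transfer =
  fixes N n :: nat and L :: "nat \<Rightarrow> nat" and W :: species and M :: cplx
  assumes n_ge: "2 \<le> n" and n_le: "n \<le> N" and L_n_pos: "1 \<le> L n"
    and W_int: "W \<in> intermediates N L"
    and M_vars: "\<forall>X\<in>Poly_Mapping.keys M. (\<exists>k. 1 \<le> k \<and> k \<le> n - 1 \<and> X \<in> block N L k)
                              \<or> X \<in> block N L (2 * N + 1)"
    and M_noreact: "\<forall>X1\<in>Poly_Mapping.keys M. \<forall>X2\<in>Poly_Mapping.keys M.
                      (X1 \<noteq> X2 \<or> 2 \<le> Poly_Mapping.lookup M X1) \<longrightarrow> \<not> reacts N L X1 X2"
    and M_nodiv: "Poly_Mapping.lookup M (S (n - 1) (L (n - 1))) = 0"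
begin

text \<open>The simplifier rewrites the \<open>L n - 1\<close> inside \<open>target\<close> to \<open>L n - Suc 0\<close>, so facts
  about \<open>target\<close> must reach it through \<open>using\<close>, not as rewrite rules.\<close>

abbreviation target :: cplx where
  "target \<equiv> sg (S n (L n - 1)) + sg W + M"

lemma lookup_M_nonzero:
  assumes "Poly_Mapping.lookup M X \<noteq> 0"
  shows "(\<exists>k j. X = S k j \<and> 1 \<le> k \<and> k < n \<and> j \<le> L k) \<or> X = E"
proof -
  from M_vars assms have "(\<exists>k. 1 \<le> k \<and> k \<le> n - 1 \<and> X \<in> block N L k) \<or> X \<in> block N L (2 * N + 1)"
    by (simp add: in_keys_iff)
  then show ?thesis using n_ge n_le unfolding block_def by (auto split: if_splits)
qed

lemma lookup_M_eq_0:
  "Poly_Mapping.lookup M (U a b) = 0" "Poly_Mapping.lookup M (V a b) = 0"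
  "Poly_Mapping.lookup M (F a) = 0" "n \<le> a \<Longrightarrow> Poly_Mapping.lookup M (S a b) = 0"
  using lookup_M_nonzero by fastforce+

lemma W_neq [simp]: "W \<noteq> S a b" "S a b \<noteq> W" "W \<noteq> E" "E \<noteq> W" "W \<noteq> F a" "F a \<noteq> W"
  using W_int unfolding intermediates_def by auto

lemma lookup_M_W: "Poly_Mapping.lookup M W = 0"
  using W_int lookup_M_eq_0 unfolding intermediates_def by auto

lemma lookup_target_W: "Poly_Mapping.lookup target W = 1"
  by (simp add: lookup_add lookup_sg lookup_M_W)

lemma lookup_target_S_in_layer: "0 < Poly_Mapping.lookup target (S n (L n - 1))"
  by (simp add: lookup_add lookup_sg)

lemma lookup_target_S_prev_last: "Poly_Mapping.lookup target (S (n - 1) (L (n - 1))) = 0"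
  using n_ge M_nodiv by (auto simp: lookup_add lookup_sg)

lemma lookup_target_S_later:
  "n \<le> a \<Longrightarrow> S a b \<noteq> S n (L n - 1) \<Longrightarrow> Poly_Mapping.lookup target (S a b) = 0"
  by (auto simp: lookup_add lookup_sg lookup_M_eq_0)

lemma lookup_target_F: "Poly_Mapping.lookup target (F a) = 0"
  by (simp add: lookup_add lookup_sg lookup_M_eq_0)

lemma lookup_target_S_last: "Poly_Mapping.lookup target (S n (L n)) = 0"
  using L_n_pos lookup_target_S_later[of n "L n"] by simp

lemma lookup_target_S_next: "Poly_Mapping.lookup target (S (Suc n) b) = 0"
  using lookup_target_S_later[of "Suc n" b] by simp

lemma lookup_target_intermediate:
  "0 < Poly_Mapping.lookup target (U a b) \<Longrightarrow> U a b = W"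
  "0 < Poly_Mapping.lookup target (V a b) \<Longrightarrow> V a b = W"
  by (auto simp: lookup_add lookup_sg lookup_M_eq_0 split: if_splits)

lemma no_binding_pair_in_M:
  assumes "Poly_Mapping.lookup M A \<noteq> 0" "Poly_Mapping.lookup M B \<noteq> 0" "A \<noteq> B"
    and "(sg A + sg B, sg Y, k) \<in> reactions N L" "Y \<in> intermediates N L"
  shows False
proof -
  have "A \<in> non_intermediates N L" "B \<in> non_intermediates N L"
    using lookup_M_nonzero[OF assms(1)] lookup_M_nonzero[OF assms(2)] n_le
    unfolding non_intermediates_def by auto
  with assms(4,5) have "reacts N L A B" unfolding reacts_def by blast
  with assms(1-3) M_noreact show False by (auto simp: in_keys_iff)
qed

lemma reactant_submonomial_target:
  assumes "(y, y', k) \<in> reactions N L" and sub: "submonomial y target"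
  shows "y = sg W"
  using assms(1)
proof (cases rule: reactions_cases)
  case (RA m j)
  let ?A = "lastS L (m - 1)" and ?B = "S m (j - 1)"
  have in_target: "0 < Poly_Mapping.lookup target ?A" "0 < Poly_Mapping.lookup target ?B"
    using sub RA(5) by (auto dest: submonomial_sg_add_sgD)
  have "?B \<noteq> S n (L n - 1)"
  proof
    assume "?B = S n (L n - 1)"
    then have "m = n" "j = L n" using RA(3,4) L_n_pos by auto
    then show False using in_target(1) lookup_target_S_prev_last n_ge by (simp add: lastS_def)
  qed
  moreover have "?A \<noteq> S n (L n - 1)" "?A \<noteq> ?B"
    using L_n_pos RA(1) by (auto simp: lastS_def)
  ultimately have "Poly_Mapping.lookup M ?A \<noteq> 0" "Poly_Mapping.lookup M ?B \<noteq> 0"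
    using in_target by (auto simp: lookup_add lookup_sg lastS_def split: if_splits)
  moreover have "U m j \<in> intermediates N L" using RA(1-4) unfolding intermediates_def by blast
  moreover have "(sg ?A + sg ?B, sg (U m j), RA m j) \<in> reactions N L" using assms(1) RA(5) by simp
  ultimately have False using no_binding_pair_in_M \<open>?A \<noteq> ?B\<close> by blast
  then show ?thesis ..
next
  case (RB m j)
  with sub have "0 < Poly_Mapping.lookup target (U m j)" by (auto dest: submonomial_sgD)
  with RB(5) show ?thesis using lookup_target_intermediate(1) by auto
next
  case (RC m j)
  with sub have "0 < Poly_Mapping.lookup target (U m j)" by (auto dest: submonomial_sgD)
  with RC(5) show ?thesis using lookup_target_intermediate(1) by auto
next
  case (RAt m j)
  with sub have "0 < Poly_Mapping.lookup target (F m)" by (auto dest: submonomial_sg_add_sgD)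
  then show ?thesis using lookup_target_F by simp
next
  case (RBt m j)
  with sub have "0 < Poly_Mapping.lookup target (V m j)" by (auto dest: submonomial_sgD)
  with RBt(5) show ?thesis using lookup_target_intermediate(2) by auto
next
  case (RCt m j)
  with sub have "0 < Poly_Mapping.lookup target (V m j)" by (auto dest: submonomial_sgD)
  with RCt(5) show ?thesis using lookup_target_intermediate(2) by auto
qed

lemma not_doubly_marked_target: "\<not> doubly_marked N L target target"
proof
  assume "doubly_marked N L target target"
  then obtain y1 y2 where markers: "marker N L target y1" "marker N L target y2"
    and sub: "submonomial (y1 + y2) target" unfolding doubly_marked_def by blast
  have "y = sg W" if "marker N L target y" "submonomial y target" for y
  proof -
    from that have "reactant N L y"
      unfolding marker_def using submonomial_sgD by fastforce
    with that(2) show ?thesis unfolding reactant_def using reactant_submonomial_target by blast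
  qed
  moreover have "submonomial y1 target" "submonomial y2 target"
    using sub by (auto simp: submonomial_def lookup_add intro: le_trans[OF le_add1] le_trans[OF le_add2])
  ultimately have "y1 = sg W" "y2 = sg W" using markers by blast+
  with sub lookup_target_W show False by (auto simp: submonomial_def lookup_add lookup_sg dest: spec[of _ W])
qed

text \<open>Monomials stemming from the reactions of \<open>S n (L n)\<close> other than its production by
  \<open>U n (L n)\<close> stay in this set, which misses the target.\<close>

definition off_target :: "cplx \<Rightarrow> bool" where
  "off_target Z \<longleftrightarrow> doubly_marked N L target Z \<or> (\<exists>j. Z = sg (U (Suc n) j)) \<or> Z = sg (V n (L n))"

lemma off_target_reaction_step:
  assumes "off_target Z" and step: "reaction_step N L Z Z'"
  shows "off_target Z'"
proof -
  from assms(1) consider "doubly_marked N L target Z" | j where "Z = sg (U (Suc n) j)"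
    | "Z = sg (V n (L n))"
    unfolding off_target_def by blast
  then show ?thesis
  proof cases
    case 1
    then show ?thesis using doubly_marked_reaction_step step unfolding off_target_def by blast
  next
    case (2 j)
    with step have "Z' = sg (U (Suc n) j) \<or> Z' = sg (S n (L n)) + sg (S (Suc n) (j - 1))"
      using reaction_step_sg reactions_changing_U n_ge by (fastforce simp: lastS_def)
    then show ?thesis
      using doubly_marked_sg_add_sg[OF lookup_target_S_last lookup_target_S_next]
      unfolding off_target_def by blast
  next
    case 3
    with step have "Z' = sg (V n (L n)) \<or> Z' = sg (F n) + sg (S n (L n))"
      using reaction_step_sg reactions_changing_V by blast
    then show ?thesis
      using doubly_marked_sg_add_sg[OF lookup_target_F lookup_target_S_last]
      unfolding off_target_def by blast
  qed
qed

lemma not_off_target_target: "\<not> off_target target"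
proof -
  have "target \<noteq> sg X" if "X \<noteq> S n (L n - 1)" for X
    using lookup_target_S_in_layer that by (auto simp: lookup_sg)
  then show ?thesis using not_doubly_marked_target unfolding off_target_def by auto
qed

lemma Dt_Var_U_last:
  "Dt N L (Var (U n (L n)))
     = cconst (rc (RA n (L n))) * (Var (S n (L n - 1)) * Var (S (n - 1) (L (n - 1))))
       - cconst (rc (RB n (L n)) + rc (RC n (L n))) * Var (U n (L n))"
proof -
  have "U n (L n) \<in> species_set N L"
    using n_ge n_le L_n_pos unfolding species_set_def intermediates_def by auto
  then show ?thesis using rhs_U[of n N "L n" L] n_ge n_le L_n_pos
    by (simp add: Dt_Var lastS_def single_sg_eq_cconst_mult_Var single_sg_add_sg_eq_cconst_mult_Var)
qed

lemma lookup_funpow_Dt_S_last_Suc: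
  "Poly_Mapping.lookup ((Dt N L ^^ Suc k) (Var (S n (L n)))) target
     = rc (RC n (L n)) * Poly_Mapping.lookup ((Dt N L ^^ k) (Var (U n (L n)))) target"
proof -
  obtain R where R: "rhs N L (S n (L n)) = Poly_Mapping.single (sg (U n (L n))) (rc (RC n (L n))) + R"
    and keys_R: "\<And>Z. Z \<in> Poly_Mapping.keys R \<Longrightarrow>
       (\<exists>j. Z = sg (S n (L n)) + sg (S (Suc n) (j - 1)) \<or> Z = sg (U (Suc n) j))
       \<or> Z = sg (F n) + sg (S n (L n)) \<or> Z = sg (V n (L n))"
    using rhs_S_last[of n N L] n_ge n_le L_n_pos by auto
  have "Poly_Mapping.keys R \<subseteq> {Z. off_target Z}"
    using keys_R doubly_marked_sg_add_sg[OF lookup_target_S_last lookup_target_S_next]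
      doubly_marked_sg_add_sg[OF lookup_target_F lookup_target_S_last]
    unfolding off_target_def by blast
  then have R_vanishes: "Poly_Mapping.lookup ((Dt N L ^^ k) R) target = 0"
    by (rule lookup_funpow_Dt_eq_0[rotated]) (use off_target_reaction_step not_off_target_target in auto)
  have "S n (L n) \<in> species_set N L"
    using n_ge n_le unfolding species_set_def non_intermediates_def by auto
  then have "(Dt N L ^^ Suc k) (Var (S n (L n)))
      = cconst (rc (RC n (L n))) * (Dt N L ^^ k) (Var (U n (L n))) + (Dt N L ^^ k) R"
    by (simp add: funpow_swap1 Dt_Var R single_sg_eq_cconst_mult_Var funpow_Dt_add funpow_Dt_cconst_mult)
  with R_vanishes show ?thesis by (simp add: lookup_add lookup_cconst_mult)
qed

lemma lookup_funpow_Dt_U_last_Suc: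
  "Poly_Mapping.lookup ((Dt N L ^^ Suc k) (Var (U n (L n)))) target
     = rc (RA n (L n)) * Poly_Mapping.lookup ((Dt N L ^^ k) (Var (S (n - 1) (L (n - 1))))) (sg W + M)
       - (rc (RB n (L n)) + rc (RC n (L n))) * Poly_Mapping.lookup ((Dt N L ^^ k) (Var (U n (L n)))) target"
proof -
  have "S n (L n - 1) \<in> species_set N L"
    using n_ge n_le unfolding species_set_def non_intermediates_def by auto
  then have "Poly_Mapping.lookup ((Dt N L ^^ k) (Var (S n (L n - 1)) * Var (S (n - 1) (L (n - 1))))) target
      = Poly_Mapping.lookup ((Dt N L ^^ k) (Var (S (n - 1) (L (n - 1))))) (target - sg (S n (L n - 1)))"
    using lookup_target_S_prev_last lookup_target_S_in_layer not_doubly_marked_target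
    by (rule lookup_funpow_Dt_Var_mult)
  moreover have "target - sg (S n (L n - 1)) = sg W + M"
    by (simp add: poly_mapping_eq_iff fun_eq_iff lookup_add lookup_minus)
  ultimately show ?thesis
    by (simp add: funpow_swap1 Dt_Var_U_last funpow_Dt_diff funpow_Dt_cconst_mult lookup_minus lookup_cconst_mult)
qed

lemma lookup_Var_U_last_target: "Poly_Mapping.lookup (Var (U n (L n))) target = 0"
proof -
  have "sg (U n (L n)) \<noteq> target"
  proof
    assume "sg (U n (L n)) = target"
    then have "Poly_Mapping.lookup (sg (U n (L n))) (S n (L n - 1))
        = Poly_Mapping.lookup target (S n (L n - 1))" by simp
    with lookup_target_S_in_layer show False by (simp add: lookup_sg)
  qed
  then show ?thesis by (simp add: Var_def lookup_single)
qed

lemma lookup_Var_S_prev_last: "Poly_Mapping.lookup (Var (S (n - 1) (L (n - 1)))) (sg W + M) = 0"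
proof -
  have "Poly_Mapping.lookup (sg W + M) W \<noteq> Poly_Mapping.lookup (sg (S (n - 1) (L (n - 1)))) W"
    by (simp add: lookup_add lookup_sg)
  then show ?thesis by (auto simp: Var_def lookup_single when_def)
qed

end

theorem mainTheorem18:
  fixes N n l0 :: nat and L :: "nat \<Rightarrow> nat" and W :: species and M :: cplx
  assumes N_pos: "1 \<le> N"
    and L_pos: "\<forall>m. 1 \<le> m \<and> m \<le> N \<longrightarrow> 1 \<le> L m"
    and n_bounds: "2 \<le> n" "n \<le> N"
    and W_int: "W \<in> intermediates N L"
    and l0_pos: "1 \<le> l0"
    and appears: "coeff_of (deriv_iter N L l0 (Var (S (n - 1) (L (n - 1))))) (sg W + M) \<noteq> 0"
    and first: "\<forall>l. 1 \<le> l \<and> l < l0 \<longrightarrow>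
                  coeff_of (deriv_iter N L l (Var (S (n - 1) (L (n - 1))))) (sg W + M) = 0"
    and M_vars: "\<forall>X\<in>Poly_Mapping.keys M. (\<exists>k. 1 \<le> k \<and> k \<le> n - 1 \<and> X \<in> block N L k)
                              \<or> X \<in> block N L (2 * N + 1)"
    and M_noreact: "\<forall>X1\<in>Poly_Mapping.keys M. \<forall>X2\<in>Poly_Mapping.keys M. (X1 \<noteq> X2 \<or> 2 \<le> Poly_Mapping.lookup M X1)
                              \<longrightarrow> \<not> reacts N L X1 X2"
    and M_nodiv: "Poly_Mapping.lookup M (S (n - 1) (L (n - 1))) = 0"
  shows "let C  = coeff_of (deriv_iter N L l0 (Var (S (n - 1) (L (n - 1))))) (sg W + M);
             Ct = coeff_of (deriv_iter N L (l0 + 1) (Var (S (n - 1) (L (n - 1))))) (sg W + M);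
             Mh = sg (S n (L n - 1)) + sg W + M;
             K  = rc (RB n (L n)) + rc (RC n (L n))
         in coeff_of (deriv_iter N L (l0 + 2) (Var (S n (L n)))) Mh \<noteq> 0
          \<and> (\<forall>l. 1 \<le> l \<and> l < l0 + 2 \<longrightarrow> coeff_of (deriv_iter N L l (Var (S n (L n)))) Mh = 0)
          \<and> coeff_of (deriv_iter N L (l0 + 2) (Var (S n (L n)))) Mh
              = rc (RC n (L n)) * rc (RA n (L n)) * C
          \<and> coeff_of (deriv_iter N L (l0 + 3) (Var (S n (L n)))) Mh
              = rc (RC n (L n)) * rc (RA n (L n)) * (Ct - K * C)"
proof -
  interpret cascade_layer_transfer N n L W M
    using n_bounds L_pos W_int M_vars M_noreact M_nodiv by unfold_locales auto
  define \<gamma> where "\<gamma> k = coeff_of (deriv_iter N L k (Var (S (n - 1) (L (n - 1))))) (sg W + M)" for k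
  define \<delta> where "\<delta> k = coeff_of (deriv_iter N L k (Var (U n (L n)))) target" for k
  define \<sigma> where "\<sigma> k = coeff_of (deriv_iter N L k (Var (S n (L n)))) target" for k
  have \<gamma>_early: "\<gamma> k = 0" if "k < l0" for k
    using first that lookup_Var_S_prev_last
    by (cases k) (auto simp: \<gamma>_def coeff_of_def deriv_iter_def)
  have \<sigma>_Suc: "\<sigma> (Suc k) = rc (RC n (L n)) * \<delta> k" for k
    using lookup_funpow_Dt_S_last_Suc by (simp add: \<sigma>_def \<delta>_def coeff_of_def deriv_iter_def)
  have \<delta>_Suc: "\<delta> (Suc k) = rc (RA n (L n)) * \<gamma> k - (rc (RB n (L n)) + rc (RC n (L n))) * \<delta> k" for k
    using lookup_funpow_Dt_U_last_Suc by (simp add: \<gamma>_def \<delta>_def coeff_of_def deriv_iter_def)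
  have "\<delta> 0 = 0"
    using lookup_Var_U_last_target by (simp add: \<delta>_def coeff_of_def deriv_iter_def)
  note unrolled = coupled_recurrence_initial_terms[OF \<sigma>_Suc \<delta>_Suc this \<gamma>_early]
  show ?thesis
    using unrolled rc_mult_rc_mult_nonzero[OF appears] unfolding Let_def \<sigma>_def \<gamma>_def by auto
qed

end
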